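(* For integers $N>3$ and $k\in\{1,\dots,N-2\}$ and real $t>0$, let $I_t(k,N)=\sum_{j=k+1}^{N-1}e^{-t(1-\cos(\pi j/N))}$. Then (i) $\displaystyle I_t(k,N)\le \frac12\sqrt{\frac\pi2}\,\frac{N}{\sqrt t}\,e^{-2tk^2/N^2}$, and (ii) $\displaystyle I_t(k,N)\le \frac12\,\frac{N^2}{kt}\,e^{-2tk^2/N^2}$. *)

theory Defs
  imports Complex_Main
begin

definition I_sum :: "real \<Rightarrow> nat \<Rightarrow> nat \<Rightarrow> real" where
  "I_sum t k N = (\<Sum>j = k+1..N-1. exp (- t * (1 - cos (pi * real j / real N))))"

end

theory Submission imports Defs "HOL-Probability.Distributions" begin

text \<open>Jordan's inequality \<open>sin y \<ge> 2y/pi\<close> on \<open>[0, pi/2]\<close> gives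
\<open>1 - cos (pi j/N) \<ge> 2 (j/N)^2\<close>. With \<open>a = 2t/N^2\<close> and \<open>j = k + m\<close>, the inequalities
\<open>(k + m)^2 \<ge> k^2 + m^2\<close> and \<open>(k + m)^2 \<ge> k^2 + 2km\<close> bound each summand by
\<open>exp (-a k^2)\<close> times \<open>exp (-a m^2)\<close>, resp. \<open>exp (-2akm)\<close>. The first sum over \<open>m \<ge> 1\<close> is
dominated by the half-line Gaussian integral \<open>sqrt (pi/a) / 2\<close>, the second by the geometric
series \<open>1 / (2ak)\<close>.\<close>

lemma x_cos_le_sin:
  fixes x :: real
  assumes "0 \<le> x" "x \<le> pi"
  shows "x * cos x \<le> sin x"
proof -
  have "(\<lambda>x. x * cos x - sin x) x \<le> (\<lambda>x. x * cos x - sin x) 0"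
  proof (rule deriv_nonpos_imp_antimono[where g = "\<lambda>x. x * cos x - sin x" and g' = "\<lambda>x. - (x * sin x)"])
    fix z :: real
    assume "z \<in> {0..x}"
    then show "- (z * sin z) \<le> 0"
      using assms sin_ge_zero[of z] by auto
    show "((\<lambda>x. x * cos x - sin x) has_real_derivative - (z * sin z)) (at z)"
      by (auto intro!: derivative_eq_intros)
  qed (use assms in auto)
  then show ?thesis by simp
qed

lemma Jordan_inequality:
  fixes y :: real
  assumes "0 \<le> y" "y \<le> pi / 2"
  shows "2 / pi * y \<le> sin y"
proof (cases "y = 0")
  case False
  then have "y > 0" using assms by simp
  \<comment> \<open>\<open>sin x / x\<close> decreases on \<open>(0, pi/2]\<close> and equals \<open>2/pi\<close> at the right end.\<close>
  have "sin (pi / 2) / (pi / 2) \<le> sin y / y"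
  proof (rule DERIV_nonpos_imp_decreasing_open[OF assms(2)])
    fix x :: real
    assume x: "y < x" "x < pi / 2"
    have "((\<lambda>x. sin x / x) has_real_derivative (cos x * x - sin x * 1) / (x * x)) (at x)"
      using x \<open>y > 0\<close> by (auto intro!: derivative_eq_intros)
    moreover have "(cos x * x - sin x * 1) / (x * x) \<le> 0"
      using x_cos_le_sin[of x] x \<open>y > 0\<close> by (intro divide_nonpos_pos) (auto simp: mult.commute)
    ultimately show "\<exists>d. ((\<lambda>x. sin x / x) has_real_derivative d) (at x) \<and> d \<le> 0"
      by blast
  qed (use \<open>y > 0\<close> in \<open>auto intro!: continuous_intros\<close>)
  then show ?thesis
    using \<open>y > 0\<close> by (simp add: field_simps)
qed simp

lemma one_minus_cos_ge_square:
  fixes x :: real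
  assumes "0 \<le> x" "x \<le> pi"
  shows "2 * (x / pi)\<^sup>2 \<le> 1 - cos x"
proof -
  have "x / pi \<le> sin (x / 2)"
    using Jordan_inequality[of "x / 2"] assms by simp
  then have "(x / pi)\<^sup>2 \<le> (sin (x / 2))\<^sup>2"
    using assms by (intro power_mono) auto
  moreover have "cos x = 1 - 2 * (sin (x / 2))\<^sup>2"
    using cos_double_sin[of "x / 2"] by simp
  ultimately show ?thesis by simp
qed

lemma integral_exp_neg_square_le:
  fixes c :: real
  assumes "0 \<le> c"
  shows "integral {0..c} (\<lambda>x. exp (- x\<^sup>2)) \<le> sqrt pi / 2"
proof -
  have "integrable lborel (\<lambda>x::real. indicator {0..} x *\<^sub>R exp (- x\<^sup>2))"
    and "integral\<^sup>L lborel (\<lambda>x::real. indicator {0..} x *\<^sub>R exp (- x\<^sup>2)) = sqrt pi / 2"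
    using gaussian_moment_0 by (auto simp: has_bochner_integral_iff)
  then have "((\<lambda>x::real. indicator {0..} x *\<^sub>R exp (- x\<^sup>2)) has_integral sqrt pi / 2) UNIV"
    using has_integral_integral_real by metis
  moreover have "(\<lambda>x::real. indicator {0..} x *\<^sub>R exp (- x\<^sup>2)) = (\<lambda>x. if x \<in> {0..} then exp (- x\<^sup>2) else 0)"
    by (auto simp: indicator_def)
  ultimately have half_line: "((\<lambda>x::real. exp (- x\<^sup>2)) has_integral sqrt pi / 2) {0..}"
    by (simp only: has_integral_restrict_UNIV)
  have "integral {0..c} (\<lambda>x::real. exp (- x\<^sup>2)) \<le> integral {0..} (\<lambda>x::real. exp (- x\<^sup>2))"
    using half_line
    by (intro integral_subset_le) (auto intro!: integrable_continuous_interval continuous_intros)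
  also have "\<dots> = sqrt pi / 2"
    using half_line by (rule integral_unique)
  finally show ?thesis .
qed

lemma sum_le_integral_antimono:
  fixes f :: "real \<Rightarrow> real" and b :: real
  assumes "b > 0" and cont: "continuous_on {0..} f"
    and antimono: "\<And>x y. 0 \<le> x \<Longrightarrow> x \<le> y \<Longrightarrow> f y \<le> f x"
  shows "b * (\<Sum>m=1..n. f (b * real m)) \<le> integral {0..b * real n} f"
proof (induction n)
  case (Suc n)
  have integrable: "f integrable_on {u..v}" if "0 \<le> u" for u v
    using that by (intro integrable_continuous_interval continuous_on_subset[OF cont]) auto
  have "b * f (b * real (Suc n)) = integral {b * real n..b * real (Suc n)} (\<lambda>_. f (b * real (Suc n)))"
    using \<open>b > 0\<close> by (simp add: algebra_simps)
  also have "\<dots> \<le> integral {b * real n..b * real (Suc n)} f"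
    using \<open>b > 0\<close> by (intro integral_le integrable antimono) (auto intro: order_trans[rotated])
  finally have "b * f (b * real (Suc n)) \<le> integral {b * real n..b * real (Suc n)} f" .
  moreover have "integral {0..b * real n} f + integral {b * real n..b * real (Suc n)} f
      = integral {0..b * real (Suc n)} f"
    using \<open>b > 0\<close>
    by (intro Henstock_Kurzweil_Integration.integral_combine integrable) auto
  ultimately show ?case
    using Suc by (simp add: distrib_left)
qed simp

lemma sum_exp_neg_square_le:
  fixes a :: real
  assumes "a > 0"
  shows "(\<Sum>m=1..n. exp (- a * real m ^ 2)) \<le> sqrt (pi / a) / 2"
proof -
  define b where "b = sqrt a"
  have "b > 0" using assms by (simp add: b_def)
  have "b * (\<Sum>m=1..n. exp (- (b * real m)\<^sup>2)) \<le> integral {0..b * real n} (\<lambda>x. exp (- x\<^sup>2))"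
    using \<open>b > 0\<close> by (intro sum_le_integral_antimono) (auto intro!: continuous_intros power_mono)
  also have "\<dots> \<le> sqrt pi / 2"
    using \<open>b > 0\<close> by (intro integral_exp_neg_square_le) simp
  finally show ?thesis
    using assms \<open>b > 0\<close> by (simp add: b_def power_mult_distrib real_sqrt_divide field_simps)
qed

lemma sum_exp_neg_linear_le:
  fixes c :: real
  assumes "c > 0"
  shows "(\<Sum>m=1..n. exp (- c * real m)) \<le> 1 / c"
proof -
  define q where "q = exp (- c)"
  have q: "0 < q" "q < 1" using assms by (auto simp: q_def)
  have "(\<Sum>m=1..n. exp (- c * real m)) = (\<Sum>m=1..n. q ^ m)"
    by (simp add: q_def exp_of_nat_mult[symmetric] mult.commute)
  also have "\<dots> \<le> q / (1 - q)"
  proof (cases "n = 0")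
    case False
    then have "(1 - q) * (\<Sum>m=1..n. q ^ m) = q - q ^ Suc n"
      using sum_gp_multiplied[of 1 n q] by simp
    then have "(1 - q) * (\<Sum>m=1..n. q ^ m) \<le> q"
      using q by simp
    then show ?thesis
      using q by (simp add: le_divide_eq mult.commute)
  qed (use q in simp)
  also have "\<dots> = 1 / (exp c - 1)"
    using q by (simp add: q_def exp_minus field_simps)
  also have "\<dots> \<le> 1 / c"
    using assms exp_ge_add_one_self[of c] by (intro divide_left_mono) (auto simp: algebra_simps)
  finally show ?thesis .
qed

lemma gaussian_tail_sum_le_sqrt:
  fixes a \<kappa> :: real
  assumes "a > 0" "\<kappa> \<ge> 0"
  shows "(\<Sum>m=1..n. exp (- a * (\<kappa> + real m)\<^sup>2)) \<le> exp (- a * \<kappa>\<^sup>2) * (sqrt (pi / a) / 2)"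
proof -
  have "(\<Sum>m=1..n. exp (- a * (\<kappa> + real m)\<^sup>2)) \<le> (\<Sum>m=1..n. exp (- a * \<kappa>\<^sup>2) * exp (- a * real m ^ 2))"
    using assms by (intro sum_mono) (simp add: exp_add[symmetric] power2_sum algebra_simps)
  also have "\<dots> \<le> exp (- a * \<kappa>\<^sup>2) * (sqrt (pi / a) / 2)"
    using sum_exp_neg_square_le[OF \<open>a > 0\<close>] by (simp add: sum_distrib_left[symmetric])
  finally show ?thesis .
qed

lemma gaussian_tail_sum_le_geometric:
  fixes a \<kappa> :: real
  assumes "a > 0" "\<kappa> > 0"
  shows "(\<Sum>m=1..n. exp (- a * (\<kappa> + real m)\<^sup>2)) \<le> exp (- a * \<kappa>\<^sup>2) / (2 * a * \<kappa>)"
proof -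
  have "(\<Sum>m=1..n. exp (- a * (\<kappa> + real m)\<^sup>2))
      \<le> (\<Sum>m=1..n. exp (- a * \<kappa>\<^sup>2) * exp (- (2 * a * \<kappa>) * real m))"
    using assms by (intro sum_mono) (simp add: exp_add[symmetric] power2_sum algebra_simps)
  also have "\<dots> = exp (- a * \<kappa>\<^sup>2) * (\<Sum>m=1..n. exp (- (2 * a * \<kappa>) * real m))"
    by (simp add: sum_distrib_left)
  also have "\<dots> \<le> exp (- a * \<kappa>\<^sup>2) * (1 / (2 * a * \<kappa>))"
    using assms by (intro mult_left_mono sum_exp_neg_linear_le) auto
  finally show ?thesis by simp
qed

lemma I_sum_le_gaussian_tail:
  fixes N k :: nat and t :: real
  assumes "k < N" "t \<ge> 0"
  shows "I_sum t k N \<le> (\<Sum>m=1..N-1-k. exp (- (2 * t / real N ^ 2) * (real k + real m)\<^sup>2))"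
proof -
  have "I_sum t k N \<le> (\<Sum>j=k+1..N-1. exp (- (2 * t / real N ^ 2) * (real j)\<^sup>2))"
    unfolding I_sum_def
  proof (intro sum_mono)
    fix j assume "j \<in> {k+1..N-1}"
    then have "j \<le> N" by (simp, arith)
    then have "2 * (real j / real N)\<^sup>2 \<le> 1 - cos (pi * real j / real N)"
      using one_minus_cos_ge_square[of "pi * real j / real N"] \<open>k < N\<close> by (simp add: field_simps)
    then have "t * (2 * (real j / real N)\<^sup>2) \<le> t * (1 - cos (pi * real j / real N))"
      using \<open>t \<ge> 0\<close> by (rule mult_left_mono)
    moreover have "t * (2 * (real j / real N)\<^sup>2) = 2 * t / real N ^ 2 * (real j)\<^sup>2"
      by (simp add: power_divide)
    ultimately show "exp (- t * (1 - cos (pi * real j / real N))) \<le> exp (- (2 * t / real N ^ 2) * (real j)\<^sup>2)"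
      by simp
  qed
  also have "\<dots> = (\<Sum>m=1..N-1-k. exp (- (2 * t / real N ^ 2) * (real k + real m)\<^sup>2))"
    using \<open>k < N\<close> sum.shift_bounds_cl_nat_ivl[of "\<lambda>j. exp (- (2 * t / real N ^ 2) * (real j)\<^sup>2)" 1 k "N-1-k"]
    by (simp add: add.commute)
  finally show ?thesis .
qed

theorem lemma2:
  fixes N k :: nat and t :: real
  assumes "N > 3" and "1 \<le> k" and "k \<le> N - 2" and "t > 0"
  shows "I_sum t k N \<le> 1/2 * sqrt (pi/2) * real N / sqrt t * exp (- 2 * t * real k ^ 2 / real N ^ 2)
       \<and> I_sum t k N \<le> 1/2 * real N ^ 2 / (real k * t) * exp (- 2 * t * real k ^ 2 / real N ^ 2)"
proof -
  define a where "a = 2 * t / real N ^ 2"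
  have "a > 0" using assms by (simp add: a_def)
  have tail: "I_sum t k N \<le> (\<Sum>m=1..N-1-k. exp (- a * (real k + real m)\<^sup>2))"
    unfolding a_def using assms by (intro I_sum_le_gaussian_tail) auto
  have exp_a: "exp (- 2 * t * real k ^ 2 / real N ^ 2) = exp (- a * (real k)\<^sup>2)"
    by (simp add: a_def)
  have "sqrt (pi / a) / 2 = 1/2 * sqrt (pi/2) * real N / sqrt t"
    using assms by (simp add: a_def real_sqrt_divide real_sqrt_mult field_simps)
  then have "I_sum t k N \<le> 1/2 * sqrt (pi/2) * real N / sqrt t * exp (- 2 * t * real k ^ 2 / real N ^ 2)"
    using tail gaussian_tail_sum_le_sqrt[OF \<open>a > 0\<close>, of "real k" "N-1-k"] exp_a
    by (simp add: mult.commute)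
  moreover have "exp (- a * (real k)\<^sup>2) / (2 * a * real k)
      \<le> 1/2 * real N ^ 2 / (real k * t) * exp (- 2 * t * real k ^ 2 / real N ^ 2)"
    using assms by (simp add: exp_a a_def field_simps)
  then have "I_sum t k N \<le> 1/2 * real N ^ 2 / (real k * t) * exp (- 2 * t * real k ^ 2 / real N ^ 2)"
    using tail gaussian_tail_sum_le_geometric[OF \<open>a > 0\<close>, of "real k" "N-1-k"] assms by simp
  ultimately show ?thesis ..
qed

end
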